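(* Let $\delta$ be a positive integer, let $G$ be a graph on $n$ vertices with minimum degree at least $\delta$, and let $x>0$ be fixed. Define $$C_x=\frac{\ln(1+x)}{\ln(1+x)-\frac{x}{1+x}},\qquad D_x=\frac{2\ln\left(\frac{x}{1+x}\right)}{\ln(1+x)}.$$ If $$n\ge (C_x-1)\delta^2+((1-D_x)C_x+1+D_x)\delta-D_x,$$ then either $G=K_{\delta,n-\delta}$ or $P(G,x)<P(K_{\delta,n-\delta},x)$.
   Context: Graphs are simple, loopless and finite. For a graph $G$, $i_t(G)$ is the number of independent sets of size $t$ in $G$ (with $i_0(G)=1$), and the independent set polynomial is $P(G,x)=\sum_{t\ge 0} i_t(G)x^t$. $K_{a,b}$ is the complete bipartite graph with $a$ vertices in one part and $b$ in the other. *)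

theory Defs
  imports Complex_Main
begin

definition simple_graph :: "'a set \<Rightarrow> ('a \<Rightarrow> 'a \<Rightarrow> bool) \<Rightarrow> bool" where
  "simple_graph V E \<longleftrightarrow> finite V \<and> (\<forall>u v. E u v \<longrightarrow> E v u)
     \<and> (\<forall>v. \<not> E v v) \<and> (\<forall>u v. E u v \<longrightarrow> u \<in> V \<and> v \<in> V)"

definition degree :: "'a set \<Rightarrow> ('a \<Rightarrow> 'a \<Rightarrow> bool) \<Rightarrow> 'a \<Rightarrow> nat" where
  "degree V E v = card {u \<in> V. E v u}"

definition min_degree_ge :: "'a set \<Rightarrow> ('a \<Rightarrow> 'a \<Rightarrow> bool) \<Rightarrow> nat \<Rightarrow> bool" where
  "min_degree_ge V E d \<longleftrightarrow> (\<forall>v\<in>V. degree V E v \<ge> d)"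

definition independent_set :: "'a set \<Rightarrow> ('a \<Rightarrow> 'a \<Rightarrow> bool) \<Rightarrow> 'a set \<Rightarrow> bool" where
  "independent_set V E S \<longleftrightarrow> S \<subseteq> V \<and> (\<forall>u\<in>S. \<forall>v\<in>S. \<not> E u v)"

definition num_indep :: "'a set \<Rightarrow> ('a \<Rightarrow> 'a \<Rightarrow> bool) \<Rightarrow> nat \<Rightarrow> nat" where
  "num_indep V E t = card {S. independent_set V E S \<and> card S = t}"

text \<open>Independent set polynomial P(G,x) = sum_t i_t(G) x^t (terms with t > |V| vanish).\<close>
definition indep_poly :: "'a set \<Rightarrow> ('a \<Rightarrow> 'a \<Rightarrow> bool) \<Rightarrow> real \<Rightarrow> real" where
  "indep_poly V E x = (\<Sum>t\<le>card V. real (num_indep V E t) * x ^ t)"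

text \<open>Complete bipartite graph K_{a,b} on vertex set {0..<a+b}, parts {0..<a} and {a..<a+b}.\<close>
definition Kab_verts :: "nat \<Rightarrow> nat \<Rightarrow> nat set" where
  "Kab_verts a b = {0..<a+b}"

definition Kab_edge :: "nat \<Rightarrow> nat \<Rightarrow> nat \<Rightarrow> nat \<Rightarrow> bool" where
  "Kab_edge a b u v \<longleftrightarrow> u < a + b \<and> v < a + b \<and> ((u < a) \<noteq> (v < a))"

definition graph_iso :: "'a set \<Rightarrow> ('a \<Rightarrow> 'a \<Rightarrow> bool) \<Rightarrow> 'b set \<Rightarrow> ('b \<Rightarrow> 'b \<Rightarrow> bool) \<Rightarrow> bool" where
  "graph_iso V E W F \<longleftrightarrow> (\<exists>f. bij_betw f V W \<and> (\<forall>u\<in>V. \<forall>v\<in>V. E u v \<longleftrightarrow> F (f u) (f v)))"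

definition C_const :: "real \<Rightarrow> real" where
  "C_const x = ln (1 + x) / (ln (1 + x) - x / (1 + x))"

definition D_const :: "real \<Rightarrow> real" where
  "D_const x = 2 * ln (x / (1 + x)) / ln (1 + x)"

end

theory Submission
  imports Defs
begin

text \<open>
  Put \<open>m = n - \<delta>\<close>. Both parts of \<open>K\<^sub>\<delta>\<^sub>,\<^sub>m\<close> are independent, so
  \<open>P(K\<^sub>\<delta>\<^sub>,\<^sub>m, x) \<ge> (1 + x)\<^sup>m + (1 + x)\<^sup>\<delta> - 1\<close>, and it suffices to beat this bound.

  If \<open>G\<close> has an independent set \<open>A\<close> with \<open>|A| \<ge> m\<close>, the degree condition forces
  \<open>|A| = m\<close> and makes every vertex of \<open>A\<close> adjacent to all \<open>\<delta>\<close> vertices outside \<open>A\<close>;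
  then \<open>G = K\<^sub>\<delta>\<^sub>,\<^sub>m\<close> unless the complement of \<open>A\<close> spans an edge, which strictly lowers
  \<open>P\<close>. If \<open>\<alpha>(G) \<le> 1\<close>, then \<open>P(G, x) \<le> 1 + n x\<close>.

  Otherwise \<open>2 \<le> \<alpha>(G) < m = k + 3\<close>. The non-neighbourhood of a vertex \<open>v\<close> has at most
  \<open>k + 2\<close> vertices and, if it has exactly \<open>k + 2\<close>, it contains an edge. Hence \<open>v\<close> lies in
  at most \<open>C(k+2, s) - C(k, s-2)\<close> independent \<open>(s+1)\<close>-sets, and double counting gives
  \<open>(s+1) i\<^sub>s\<^sub>+\<^sub>1 \<le> n (C(k+2, s) - C(k, s-2))\<close>. Summing against \<open>x\<^sup>s\<^sup>+\<^sup>1\<close> turns this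
  into a closed-form bound in \<open>(1 + x)\<^sup>m\<close> (integrals of binomial expansions). Via
  \<open>C\<^sub>x - 1 \<ge> 2/x\<close> and \<open>-D\<^sub>x \<ge> 2/(x(1+x))\<close>, the hypothesis on \<open>n\<close> makes this bound
  smaller than \<open>(1 + x)\<^sup>m + (1 + x)\<^sup>\<delta> - 1\<close>.
\<close>

section \<open>The independent set polynomial\<close>

lemma finite_independent_sets:
  "finite V \<Longrightarrow> finite {S. independent_set V E S}"
  by (rule finite_subset[of _ "Pow V"]) (auto simp: independent_set_def)

lemma num_indep_0:
  assumes "finite V"
  shows "num_indep V E 0 = 1"
proof -
  have "{S. independent_set V E S \<and> card S = 0} = {{}}"
  proof (intro set_eqI iffI)
    fix S assume S: "S \<in> {S. independent_set V E S \<and> card S = 0}"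
    then have "finite S"
      using assms finite_subset by (auto simp: independent_set_def)
    with S show "S \<in> {{}}"
      by simp
  qed (simp add: independent_set_def)
  then show ?thesis
    by (simp add: num_indep_def)
qed

lemma indep_poly_eq_sum_independent_sets:
  assumes fV: "finite V"
  shows "indep_poly V E x = (\<Sum>S | independent_set V E S. x ^ card S)"
proof -
  let ?I = "{S. independent_set V E S}"
  have "card ` ?I \<subseteq> {..card V}"
    using fV by (auto simp: independent_set_def intro: card_mono)
  then have "(\<Sum>S\<in>?I. x ^ card S) = (\<Sum>t\<le>card V. \<Sum>S | S \<in> ?I \<and> card S = t. x ^ card S)"
    using sum.group[OF finite_independent_sets[OF fV] finite_atMost, where g = card and h = "\<lambda>S. x ^ card S"]
    by simp
  also have "\<dots> = (\<Sum>t\<le>card V. real (num_indep V E t) * x ^ t)"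
  proof (rule sum.cong[OF refl])
    fix t
    have "(\<Sum>S | S \<in> ?I \<and> card S = t. x ^ card S) = (\<Sum>S | S \<in> ?I \<and> card S = t. x ^ t)"
      by (rule sum.cong) auto
    then show "(\<Sum>S | S \<in> ?I \<and> card S = t. x ^ card S) = real (num_indep V E t) * x ^ t"
      by (simp add: num_indep_def)
  qed
  finally show ?thesis
    unfolding indep_poly_def by simp
qed

lemma sum_Pow_power_card:
  fixes x :: "'b::comm_semiring_1"
  assumes "finite A"
  shows "(\<Sum>S\<in>Pow A. x ^ card S) = (1 + x) ^ card A"
  using prod_add[OF assms, of "\<lambda>_. x" "\<lambda>_. 1"] by (simp add: add.commute)

lemma indep_poly_Kab_ge:
  assumes "x \<ge> 0"
  shows "(1 + x) ^ m + (1 + x) ^ d - 1 \<le> indep_poly (Kab_verts d m) (Kab_edge d m) x"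
proof -
  let ?A = "{0..<d}" and ?B = "{d..<d+m}"
  have "?A \<inter> ?B = {}"
    by auto
  then have "Pow ?A \<inter> Pow ?B = {{}}"
    by blast
  then have "(1 + x) ^ m + (1 + x) ^ d - 1 = (\<Sum>S\<in>Pow ?A \<union> Pow ?B. x ^ card S)"
    using sum_Pow_power_card[of ?A x] sum_Pow_power_card[of ?B x] by (simp add: sum_Un)
  also have "\<dots> \<le> (\<Sum>S | independent_set (Kab_verts d m) (Kab_edge d m) S. x ^ card S)"
    using assms finite_independent_sets[of "Kab_verts d m"]
    by (intro sum_mono2) (auto simp: independent_set_def Kab_verts_def Kab_edge_def)
  finally show ?thesis
    by (simp add: indep_poly_eq_sum_independent_sets Kab_verts_def)
qed

lemma indep_poly_lt_power_card:
  assumes fV: "finite V" and uw: "u \<in> V" "w \<in> V" "E u w" and x0: "x > 0"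
  shows "indep_poly V E x < (1 + x) ^ card V"
proof -
  let ?I = "{S. independent_set V E S}"
  have sub: "?I \<subseteq> Pow V"
    by (auto simp: independent_set_def)
  have missing: "{u, w} \<in> Pow V - ?I"
    using uw by (auto simp: independent_set_def)
  have "0 < x ^ card {u, w}"
    using x0 by simp
  also have "\<dots> \<le> (\<Sum>S\<in>Pow V - ?I. x ^ card S)"
    using missing fV x0 by (intro member_le_sum) auto
  finally have "(\<Sum>S\<in>?I. x ^ card S) < (\<Sum>S\<in>Pow V. x ^ card S)"
    using sum.subset_diff[OF sub, of "\<lambda>S. x ^ card S"] fV by simp
  then show ?thesis
    using fV by (simp add: indep_poly_eq_sum_independent_sets sum_Pow_power_card)
qed

section \<open>Graphs with a large independent set\<close>

lemma large_independent_set_complete_to_rest: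
  assumes sg: "simple_graph V E" and cV: "card V = n" and md: "min_degree_ge V E d"
    and indA: "independent_set V E A" and cA: "n - d \<le> card A" and m1: "1 \<le> n - d"
  shows "card A = n - d \<and> card (V - A) = d \<and> (\<forall>a\<in>A. \<forall>b\<in>V - A. E a b)"
proof -
  have fV: "finite V"
    using sg by (simp add: simple_graph_def)
  have AV: "A \<subseteq> V" and Aind: "\<And>a b. a \<in> A \<Longrightarrow> b \<in> A \<Longrightarrow> \<not> E a b"
    using indA by (auto simp: independent_set_def)
  have fB: "finite (V - A)"
    using fV by simp
  have cB: "card (V - A) = n - card A"
    using card_Diff_subset[OF finite_subset[OF AV fV] AV] cV by simp
  have NB: "{u\<in>V. E a u} \<subseteq> V - A" if "a \<in> A" for a
    using that Aind by auto
  have degA: "d \<le> card {u\<in>V. E a u}" if "a \<in> A" for a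
    using md that AV by (auto simp: min_degree_ge_def degree_def)
  obtain a0 where "a0 \<in> A"
    using cA m1 by fastforce
  then have "d \<le> card (V - A)"
    using degA card_mono[OF fB NB] le_trans by blast
  then have cBd: "card (V - A) = d" and "card A = n - d"
    using cB cA cV card_mono[OF fV AV] by auto
  moreover have "{u\<in>V. E a u} = V - A" if "a \<in> A" for a
    using card_subset_eq[OF fB NB[OF that]] degA[OF that] cBd card_mono[OF fB NB[OF that]]
    by simp
  ultimately show ?thesis
    by blast
qed

lemma complete_bipartite_iso_Kab:
  assumes sym: "\<And>u v. E u v \<Longrightarrow> E v u"
    and V: "V = A \<union> B" and AB: "A \<inter> B = {}" and fin: "finite A" "finite B"
    and cA: "card A = m" and cB: "card B = d"
    and indA: "\<And>a a'. a \<in> A \<Longrightarrow> a' \<in> A \<Longrightarrow> \<not> E a a'"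
    and indB: "\<And>b b'. b \<in> B \<Longrightarrow> b' \<in> B \<Longrightarrow> \<not> E b b'"
    and cross: "\<And>a b. a \<in> A \<Longrightarrow> b \<in> B \<Longrightarrow> E a b"
  shows "graph_iso V E (Kab_verts d m) (Kab_edge d m)"
proof -
  obtain f1 where f1: "bij_betw f1 B {0..<d}"
    using finite_same_card_bij[OF fin(2), of "{0..<d}"] cB by auto
  obtain f2 where f2: "bij_betw f2 A {d..<d+m}"
    using finite_same_card_bij[OF fin(1), of "{d..<d+m}"] cA by auto
  define f where "f v = (if v \<in> B then f1 v else f2 v)" for v
  have bB: "bij_betw f B {0..<d}"
    using f1 by (rule bij_betw_cong[THEN iffD1, rotated]) (simp add: f_def)
  have bA: "bij_betw f A {d..<d+m}"
    using f2 AB by (intro bij_betw_cong[THEN iffD1, OF _ f2]) (auto simp: f_def)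
  have "bij_betw f (B \<union> A) ({0..<d} \<union> {d..<d+m})"
    by (rule bij_betw_combine[OF bB bA]) auto
  moreover have "{0..<d} \<union> {d..<d+m} = Kab_verts d m"
    by (auto simp: Kab_verts_def)
  ultimately have bij: "bij_betw f V (Kab_verts d m)"
    by (simp add: V Un_commute)
  have fB: "f v < d" if "v \<in> B" for v
    using bB that by (auto simp: bij_betw_def)
  have fA: "d \<le> f v \<and> f v < d + m" if "v \<in> A" for v
    using bA that by (auto simp: bij_betw_def)
  have "E u v \<longleftrightarrow> Kab_edge d m (f u) (f v)" if "u \<in> V" "v \<in> V" for u v
    using that fA[of u] fA[of v] fB[of u] fB[of v] indA[of u v] indB[of u v] cross[of u v] cross[of v u]
      sym[of u v] sym[of v u] unfolding V Kab_edge_def by auto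
  with bij show ?thesis
    unfolding graph_iso_def by blast
qed

lemma indep_poly_large_independent_set:
  assumes sg: "simple_graph V E" and cV: "card V = n" and md: "min_degree_ge V E d"
    and x0: "x > 0" and indA: "independent_set V E A" and cA: "n - d \<le> card A"
    and m1: "1 \<le> n - d"
  shows "graph_iso V E (Kab_verts d (n - d)) (Kab_edge d (n - d))
         \<or> indep_poly V E x < (1 + x) ^ (n - d) + (1 + x) ^ d - 1"
proof -
  define B where "B = V - A"
  have fV: "finite V" and sym: "\<And>u v. E u v \<Longrightarrow> E v u"
    using sg by (auto simp: simple_graph_def)
  have AV: "A \<subseteq> V" and Aind: "\<And>a a'. a \<in> A \<Longrightarrow> a' \<in> A \<Longrightarrow> \<not> E a a'"
    using indA by (auto simp: independent_set_def)
  have fA: "finite A" and fB: "finite B"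
    using AV fV finite_subset by (auto simp: B_def)
  have cAm: "card A = n - d" and cBd: "card B = d" and cross: "\<And>a b. a \<in> A \<Longrightarrow> b \<in> B \<Longrightarrow> E a b"
    using large_independent_set_complete_to_rest[OF sg cV md indA cA m1] by (auto simp: B_def)
  have "independent_set V E S \<longleftrightarrow> S \<in> Pow A \<or> independent_set B E S" for S
  proof
    assume S: "independent_set V E S"
    have "S \<subseteq> A \<or> S \<subseteq> B"
    proof (rule ccontr)
      assume "\<not> (S \<subseteq> A \<or> S \<subseteq> B)"
      then obtain a b where "a \<in> S" "a \<notin> B" "b \<in> S" "b \<notin> A"
        by blast
      then show False
        using S cross[of a b] by (auto simp: independent_set_def B_def)
    qed
    then show "S \<in> Pow A \<or> independent_set B E S"
      using S by (auto simp: independent_set_def B_def)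
  next
    assume "S \<in> Pow A \<or> independent_set B E S"
    then show "independent_set V E S"
      using AV Aind by (auto simp: independent_set_def B_def)
  qed
  then have ISeq: "{S. independent_set V E S} = Pow A \<union> {S. independent_set B E S}"
    by blast
  have "indep_poly V E x = (\<Sum>S\<in>Pow A \<union> {S. independent_set B E S}. x ^ card S)"
    using indep_poly_eq_sum_independent_sets[OF fV] ISeq by simp
  also have "\<dots> = (\<Sum>S\<in>Pow A. x ^ card S) + indep_poly B E x
                   - (\<Sum>S\<in>Pow A \<inter> {S. independent_set B E S}. x ^ card S)"
    using fA finite_independent_sets[OF fB]
    by (simp add: sum_Un indep_poly_eq_sum_independent_sets[OF fB])
  also have "Pow A \<inter> {S. independent_set B E S} = {{}}"
    by (auto simp: independent_set_def B_def)
  finally have Peq: "indep_poly V E x = (1 + x) ^ (n - d) + indep_poly B E x - 1"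
    using sum_Pow_power_card[OF fA] cAm by simp
  show ?thesis
  proof (cases "\<exists>u\<in>B. \<exists>w\<in>B. E u w")
    case True
    then obtain u w where "u \<in> B" "w \<in> B" "E u w"
      by blast
    then have "indep_poly B E x < (1 + x) ^ d"
      using indep_poly_lt_power_card[OF fB _ _ _ x0] cBd by metis
    then show ?thesis
      using Peq by simp
  next
    case False
    then have indB: "\<And>b b'. b \<in> B \<Longrightarrow> b' \<in> B \<Longrightarrow> \<not> E b b'"
      by blast
    have "V = A \<union> B" and "A \<inter> B = {}"
      using AV by (auto simp: B_def)
    then have "graph_iso V E (Kab_verts d (n - d)) (Kab_edge d (n - d))"
      using complete_bipartite_iso_Kab[of E V A B, OF sym _ _ fA fB cAm cBd Aind indB cross] by blast
    then show ?thesis ..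
  qed
qed

section \<open>Graphs without two independent vertices\<close>

lemma one_plus_power_ge:
  fixes x :: real
  assumes x0: "x \<ge> 0" and m2: "2 \<le> m"
  shows "1 + real m * x + x ^ 2 \<le> (1 + x) ^ m"
proof -
  obtain j where j: "m = j + 2"
    using m2 le_Suc_ex by (metis add.commute)
  have "1 + real m * x + x ^ 2 \<le> (1 + x) ^ 2 * (1 + real j * x)"
    using x0 unfolding j by (simp add: algebra_simps power2_eq_square)
  also have "\<dots> \<le> (1 + x) ^ 2 * (1 + x) ^ j"
    using Bernoulli_inequality[of x j] x0 by (intro mult_left_mono) auto
  also have "\<dots> = (1 + x) ^ m"
    unfolding j power_add by (rule mult.commute)
  finally show ?thesis .
qed

lemma indep_poly_le_of_independence_le_1:
  assumes fV: "finite V" and le1: "\<And>S. independent_set V E S \<Longrightarrow> card S \<le> 1"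
    and x0: "x \<ge> 0"
  shows "indep_poly V E x \<le> 1 + real (card V) * x"
proof -
  have sub: "{S. independent_set V E S} \<subseteq> insert {} ((\<lambda>v. {v}) ` V)"
  proof
    fix S assume S: "S \<in> {S. independent_set V E S}"
    then have "S \<subseteq> V" and "finite S"
      using fV finite_subset by (auto simp: independent_set_def)
    moreover have "card S \<le> Suc 0"
      using le1 S by simp
    ultimately show "S \<in> insert {} ((\<lambda>v. {v}) ` V)"
    proof (cases "S = {}")
      case False
      then obtain v where "v \<in> S"
        by blast
      then have "S = {v}"
        using \<open>card S \<le> Suc 0\<close> \<open>finite S\<close> card_le_Suc0_iff_eq by blast
      then show ?thesis
        using \<open>S \<subseteq> V\<close> by auto
    qed simp
  qed
  have "indep_poly V E x \<le> (\<Sum>S\<in>insert {} ((\<lambda>v. {v}) ` V). x ^ card S)"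
    unfolding indep_poly_eq_sum_independent_sets[OF fV] by (rule sum_mono2[OF _ sub]) (simp_all add: fV x0)
  also have "\<dots> = 1 + (\<Sum>v\<in>V. x ^ card {v})"
    using fV by (subst sum.insert) (auto simp: sum.reindex inj_on_def)
  also have "\<dots> = 1 + real (card V) * x"
    by simp
  finally show ?thesis .
qed

lemma indep_poly_lt_of_independence_le_1:
  fixes x :: real
  assumes fV: "finite V" and cV: "card V = m + d" and le1: "\<And>S. independent_set V E S \<Longrightarrow> card S \<le> 1"
    and m2: "2 \<le> m" and x0: "x > 0"
  shows "indep_poly V E x < (1 + x) ^ m + (1 + x) ^ d - 1"
proof -
  have "indep_poly V E x \<le> 1 + real m * x + real d * x"
    using indep_poly_le_of_independence_le_1[of V E x, OF fV le1] x0 cV by (simp add: algebra_simps)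
  also have "\<dots> < (1 + real m * x + x\<^sup>2) + (1 + real d * x) - 1"
    using x0 by simp
  also have "\<dots> \<le> (1 + x) ^ m + (1 + x) ^ d - 1"
    using one_plus_power_ge[of x m] Bernoulli_inequality[of x d] x0 m2 by simp
  finally show ?thesis .
qed

section \<open>Independent sets through a vertex\<close>

definition pair_avoiding_subsets :: "nat \<Rightarrow> nat \<Rightarrow> real" where
  "pair_avoiding_subsets k s =
     real (Suc (Suc k) choose s) - (if 2 \<le> s then real (k choose (s - 2)) else 0)"

lemma binomial_le_pair_avoiding_subsets: "real (Suc k choose s) \<le> pair_avoiding_subsets k s"
proof (cases "2 \<le> s")
  case True
  then obtain j where j: "s = Suc (Suc j)"
    by (metis add_2_eq_Suc le_Suc_ex)
  have "Suc (Suc k) choose s = (Suc k choose Suc j) + (Suc k choose s)" and "k choose j \<le> Suc k choose Suc j"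
    using j by simp_all
  then show ?thesis
    unfolding pair_avoiding_subsets_def using j by simp
next
  case False
  then show ?thesis
    unfolding pair_avoiding_subsets_def using binomial_right_mono[of "Suc k" "Suc (Suc k)" s] by simp
qed

lemma pair_avoiding_subsets_eq_0: "k + 2 < s \<Longrightarrow> pair_avoiding_subsets k s = 0"
  by (simp add: pair_avoiding_subsets_def binomial_eq_0)

lemma card_subsets_containing_pair:
  assumes fW: "finite W" and uw: "u \<in> W" "w \<in> W" "u \<noteq> w"
  shows "card {T. T \<subseteq> W \<and> card T = s \<and> u \<in> T \<and> w \<in> T}
         = (if 2 \<le> s then card W - 2 choose (s - 2) else 0)"
proof (cases "2 \<le> s")
  case False
  have "{T. T \<subseteq> W \<and> card T = s \<and> u \<in> T \<and> w \<in> T} = {}"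
  proof (intro equals0I)
    fix T assume T: "T \<in> {T. T \<subseteq> W \<and> card T = s \<and> u \<in> T \<and> w \<in> T}"
    then have "card {u, w} \<le> card T"
      using fW by (intro card_mono) (auto intro: finite_subset)
    then show False
      using T False uw by simp
  qed
  then show ?thesis
    using False by (metis card.empty)
next
  case True
  let ?D = "{U. U \<subseteq> W - {u, w} \<and> card U = s - 2}"
  have "{T. T \<subseteq> W \<and> card T = s \<and> u \<in> T \<and> w \<in> T} = (\<lambda>U. U \<union> {u, w}) ` ?D"
  proof (intro set_eqI iffI)
    fix T assume T: "T \<in> {T. T \<subseteq> W \<and> card T = s \<and> u \<in> T \<and> w \<in> T}"
    then have "card (T - {u, w}) = s - 2" and "T = (T - {u, w}) \<union> {u, w}"
      using fW uw finite_subset by (auto simp: card_Diff_subset)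
    then show "T \<in> (\<lambda>U. U \<union> {u, w}) ` ?D"
      using T by blast
  next
    fix T assume "T \<in> (\<lambda>U. U \<union> {u, w}) ` ?D"
    then obtain U where U: "U \<subseteq> W - {u, w}" "card U = s - 2" "T = U \<union> {u, w}"
      by blast
    then have "card T = s"
      using True uw fW finite_subset[OF U(1)] by (auto simp: card_insert_if)
    then show "T \<in> {T. T \<subseteq> W \<and> card T = s \<and> u \<in> T \<and> w \<in> T}"
      using U uw by auto
  qed
  moreover have "inj_on (\<lambda>U. U \<union> {u, w}) ?D"
    unfolding inj_on_def by blast
  moreover have "card (W - {u, w}) = card W - 2"
    using fW uw by (simp add: card_Diff_subset)
  ultimately show ?thesis
    using True fW by (simp add: card_image n_subsets)
qed

lemma card_le_pair_avoiding_subsets: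
  assumes fW: "finite W" and cW: "card W \<le> k + 2" and GW: "G \<subseteq> {T. T \<subseteq> W \<and> card T = s}"
    and pair: "card W = k + 2 \<Longrightarrow> \<exists>u\<in>W. \<exists>w\<in>W. u \<noteq> w \<and> (\<forall>T\<in>G. \<not> (u \<in> T \<and> w \<in> T))"
  shows "real (card G) \<le> pair_avoiding_subsets k s"
proof -
  let ?A = "{T. T \<subseteq> W \<and> card T = s}"
  have fA: "finite ?A" and cA: "card ?A = card W choose s"
    using fW by (simp_all add: n_subsets)
  show ?thesis
  proof (cases "card W = k + 2")
    case False
    then have "card G \<le> Suc k choose s"
      using card_mono[OF fA GW] cA cW binomial_right_mono[of "card W" "Suc k" s] by simp
    then show ?thesis
      using binomial_le_pair_avoiding_subsets[of k s] by linarith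
  next
    case True
    then obtain u w where uw: "u \<in> W" "w \<in> W" "u \<noteq> w" and nG: "\<forall>T\<in>G. \<not> (u \<in> T \<and> w \<in> T)"
      using pair by blast
    let ?B = "{T. T \<subseteq> W \<and> card T = s \<and> u \<in> T \<and> w \<in> T}"
    have BA: "?B \<subseteq> ?A"
      by auto
    have "card G \<le> card (?A - ?B)"
      using GW nG fA by (intro card_mono) auto
    also have "\<dots> = card ?A - card ?B"
      using fA BA by (simp add: card_Diff_subset finite_subset)
    finally have "real (card G) \<le> real (card ?A) - real (card ?B)"
      using card_mono[OF fA BA] by linarith
    then show ?thesis
      unfolding pair_avoiding_subsets_def cA card_subsets_containing_pair[OF fW uw] True
      by (simp split: if_splits)
  qed
qed

lemma sum_card_eq_sum_card_containing:
  assumes fV: "finite V" and fF: "finite F" and sub: "\<And>S. S \<in> F \<Longrightarrow> S \<subseteq> V"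
  shows "(\<Sum>S\<in>F. card S) = (\<Sum>v\<in>V. card {S\<in>F. v \<in> S})"
proof -
  have "(\<Sum>S\<in>F. card S) = (\<Sum>S\<in>F. \<Sum>v\<in>V. if v \<in> S then 1 else 0)"
  proof (rule sum.cong[OF refl])
    fix S assume "S \<in> F"
    then have "S \<subseteq> V"
      using sub by auto
    then show "card S = (\<Sum>v\<in>V. if v \<in> S then 1 else 0)"
      using fV by (simp add: sum.If_cases Int_absorb1)
  qed
  also have "\<dots> = (\<Sum>v\<in>V. \<Sum>S\<in>F. if v \<in> S then 1 else 0)"
    by (rule sum.swap)
  also have "\<dots> = (\<Sum>v\<in>V. card {S\<in>F. v \<in> S})"
    using fF by (simp add: sum.If_cases Int_def)
  finally show ?thesis .
qed

lemma card_non_neighbours: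
  assumes sg: "simple_graph V E" and v: "v \<in> V"
  shows "card {w\<in>V. w \<noteq> v \<and> \<not> E v w} + 1 + degree V E v = card V"
proof -
  have fV: "finite V" and irr: "\<not> E v v"
    using sg by (auto simp: simple_graph_def)
  let ?W = "{w\<in>V. w \<noteq> v \<and> \<not> E v w}" and ?N = "{u\<in>V. E v u}"
  have "card (?W \<union> insert v ?N) = card ?W + card (insert v ?N)"
    using fV by (intro card_Un_disjoint) auto
  moreover have "?W \<union> insert v ?N = V"
    using v by auto
  ultimately have "card V = card ?W + card (insert v ?N)"
    by simp
  then show ?thesis
    using fV irr by (simp add: degree_def)
qed

text \<open>Deleting \<open>v\<close> maps these sets to \<open>s\<close>-subsets of the non-neighbourhood \<open>W\<close> of \<open>v\<close>,
  \<open>|W| \<le> k + 2\<close>; if \<open>|W| = k + 2\<close> then \<open>W \<union> {v}\<close> is too large to be independent, so some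
  edge of \<open>W\<close> lies in none of them.\<close>

lemma card_independent_sets_containing_le:
  assumes sg: "simple_graph V E" and cV: "card V = k + 3 + d" and md: "min_degree_ge V E d"
    and small: "\<And>S. independent_set V E S \<Longrightarrow> card S < k + 3" and v: "v \<in> V"
  shows "real (card {S. independent_set V E S \<and> card S = Suc s \<and> v \<in> S}) \<le> pair_avoiding_subsets k s"
proof -
  have fV: "finite V" and sym: "\<And>a b. E a b \<Longrightarrow> E b a" and irr: "\<And>a. \<not> E a a"
    using sg by (auto simp: simple_graph_def)
  let ?F = "{S. independent_set V E S \<and> card S = Suc s \<and> v \<in> S}"
  let ?W = "{w\<in>V. w \<noteq> v \<and> \<not> E v w}"
  let ?G = "(\<lambda>S. S - {v}) ` ?F"
  have fW: "finite ?W"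
    using fV by simp
  have cW: "card ?W \<le> k + 2"
    using card_non_neighbours[OF sg v] md v cV by (auto simp: min_degree_ge_def)
  have "inj_on (\<lambda>S. S - {v}) ?F"
  proof (rule inj_onI)
    fix S S' assume "S \<in> ?F" "S' \<in> ?F" "S - {v} = S' - {v}"
    then show "S = S'"
      by (metis (no_types, lifting) insert_Diff mem_Collect_eq)
  qed
  then have cG: "card ?G = card ?F"
    by (rule card_image)
  have GW: "?G \<subseteq> {T. T \<subseteq> ?W \<and> card T = s}"
  proof
    fix T assume "T \<in> ?G"
    then obtain S where S: "independent_set V E S" "card S = Suc s" "v \<in> S" "T = S - {v}"
      by auto
    then have "finite S"
      using fV finite_subset by (auto simp: independent_set_def)
    with S show "T \<in> {T. T \<subseteq> ?W \<and> card T = s}"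
      by (auto simp: independent_set_def)
  qed
  have pair: "\<exists>a\<in>?W. \<exists>b\<in>?W. a \<noteq> b \<and> (\<forall>T\<in>?G. \<not> (a \<in> T \<and> b \<in> T))"
    if "card ?W = k + 2"
  proof -
    have "card (insert v ?W) = k + 3"
      using that fW by simp
    then have "\<not> independent_set V E (insert v ?W)"
      using small[of "insert v ?W"] by auto
    then obtain a b where ab: "a \<in> insert v ?W" "b \<in> insert v ?W" "E a b"
      using v by (auto simp: independent_set_def)
    then have "a \<in> ?W" "b \<in> ?W" "a \<noteq> b"
      using sym irr by auto
    moreover have "\<forall>T\<in>?G. \<not> (a \<in> T \<and> b \<in> T)"
      using ab by (auto simp: independent_set_def)
    ultimately show ?thesis
      by blast
  qed
  show ?thesis
    using card_le_pair_avoiding_subsets[OF fW cW GW pair] cG by simp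
qed

lemma mult_num_indep_le:
  assumes sg: "simple_graph V E" and cV: "card V = k + 3 + d" and md: "min_degree_ge V E d"
    and small: "\<And>S. independent_set V E S \<Longrightarrow> card S < k + 3"
  shows "real (Suc s) * real (num_indep V E (Suc s)) \<le> real (card V) * pair_avoiding_subsets k s"
proof -
  have fV: "finite V"
    using sg by (simp add: simple_graph_def)
  let ?F = "{S. independent_set V E S \<and> card S = Suc s}"
  have fF: "finite ?F"
    using finite_independent_sets[OF fV, of E] by (rule finite_subset[rotated]) auto
  have "Suc s * card ?F = (\<Sum>S\<in>?F. card S)"
    by simp
  also have "\<dots> = (\<Sum>v\<in>V. card {S\<in>?F. v \<in> S})"
    using fF by (intro sum_card_eq_sum_card_containing[OF fV]) (auto simp: independent_set_def)
  finally have "real (Suc s) * real (card ?F) = (\<Sum>v\<in>V. real (card {S\<in>?F. v \<in> S}))"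
    by (simp only: of_nat_mult[symmetric] of_nat_sum)
  also have "\<dots> \<le> (\<Sum>v\<in>V. pair_avoiding_subsets k s)"
  proof (rule sum_mono)
    fix v assume "v \<in> V"
    moreover have "{S\<in>?F. v \<in> S} = {S. independent_set V E S \<and> card S = Suc s \<and> v \<in> S}"
      by auto
    ultimately show "real (card {S\<in>?F. v \<in> S}) \<le> pair_avoiding_subsets k s"
      using card_independent_sets_containing_le[OF sg cV md small] by simp
  qed
  finally show ?thesis
    by (simp add: num_indep_def)
qed

section \<open>Summing the counting bound\<close>

lemma sum_choose_power: "(\<Sum>t\<le>N. real (N choose t) * x ^ t) = (1 + x) ^ N"
  using binomial_ring[of x 1 N] by (simp add: add.commute)

lemma sum_mult_choose_power:
  "(\<Sum>t\<le>Suc N. real t * real (Suc N choose t) * x ^ t) = real (Suc N) * x * (1 + x) ^ N"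
proof -
  have "(\<Sum>t\<le>Suc N. real t * real (Suc N choose t) * x ^ t)
      = (\<Sum>s\<le>N. real (Suc s) * real (Suc N choose Suc s) * x ^ Suc s)"
    by (subst sum.atMost_Suc_shift) simp
  also have "\<dots> = (\<Sum>s\<le>N. real (Suc N) * x * (real (N choose s) * x ^ s))"
  proof (rule sum.cong[OF refl])
    fix s
    have "real (Suc s) * real (Suc N choose Suc s) = real (Suc N) * real (N choose s)"
      using Suc_times_binomial[of s N] by (metis of_nat_mult)
    then show "real (Suc s) * real (Suc N choose Suc s) * x ^ Suc s
             = real (Suc N) * x * (real (N choose s) * x ^ s)"
      by (simp add: algebra_simps del: binomial_Suc_Suc)
  qed
  also have "\<dots> = real (Suc N) * x * (1 + x) ^ N"
    by (simp add: sum_distrib_left[symmetric] sum_choose_power)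
  finally show ?thesis .
qed

lemma sum_falling2_choose_power:
  "(\<Sum>t\<le>Suc (Suc N). real t * (real t - 1) * real (Suc (Suc N) choose t) * x ^ t)
   = real (Suc (Suc N)) * real (Suc N) * x\<^sup>2 * (1 + x) ^ N"
proof -
  have "(\<Sum>t\<le>Suc (Suc N). real t * (real t - 1) * real (Suc (Suc N) choose t) * x ^ t)
      = (\<Sum>s\<le>Suc N. real (Suc s) * real s * real (Suc (Suc N) choose Suc s) * x ^ Suc s)"
    by (subst sum.atMost_Suc_shift) simp
  also have "\<dots> = (\<Sum>s\<le>Suc N. real (Suc (Suc N)) * x * (real s * real (Suc N choose s) * x ^ s))"
  proof (rule sum.cong[OF refl])
    fix s
    have h: "real (Suc s) * real (Suc (Suc N) choose Suc s) = real (Suc (Suc N)) * real (Suc N choose s)"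
      using Suc_times_binomial[of s "Suc N"] by (metis of_nat_mult)
    have "real (Suc s) * real s * real (Suc (Suc N) choose Suc s) * x ^ Suc s
        = (real (Suc s) * real (Suc (Suc N) choose Suc s)) * (real s * x ^ Suc s)"
      by (simp only: ac_simps)
    also have "\<dots> = real (Suc (Suc N)) * x * (real s * real (Suc N choose s) * x ^ s)"
      by (simp only: h power_Suc ac_simps)
    finally show "real (Suc s) * real s * real (Suc (Suc N) choose Suc s) * x ^ Suc s
             = real (Suc (Suc N)) * x * (real s * real (Suc N choose s) * x ^ s)" .
  qed
  also have "\<dots> = real (Suc (Suc N)) * x * (real (Suc N) * x * (1 + x) ^ N)"
    by (simp only: sum_distrib_left[symmetric] sum_mult_choose_power)
  finally show ?thesis
    by (simp add: power2_eq_square algebra_simps)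
qed

lemma sum_choose_power_div_Suc:
  "real (Suc N) * (\<Sum>s\<le>N. real (N choose s) * x ^ Suc s / real (Suc s)) = (1 + x) ^ Suc N - 1"
proof -
  have "real (Suc N) * (\<Sum>s\<le>N. real (N choose s) * x ^ Suc s / real (Suc s))
     = (\<Sum>s\<le>N. real (Suc N choose Suc s) * x ^ Suc s)"
    unfolding sum_distrib_left
  proof (rule sum.cong[OF refl])
    fix s
    have "real (Suc N) * real (N choose s) = real (Suc N choose Suc s) * real (Suc s)"
      using Suc_times_binomial_eq[of N s] by (metis of_nat_mult)
    then show "real (Suc N) * (real (N choose s) * x ^ Suc s / real (Suc s))
             = real (Suc N choose Suc s) * x ^ Suc s"
      by (simp add: field_simps del: of_nat_Suc binomial_Suc_Suc)
  qed
  also have "\<dots> = (\<Sum>t\<le>Suc N. real (Suc N choose t) * x ^ t) - 1"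
    by (simp only: sum.atMost_Suc_shift) simp
  finally show ?thesis
    by (simp add: sum_choose_power)
qed

lemma Suc_Suc_Suc_times_binomial:
  "Suc k * Suc (Suc k) * Suc (Suc (Suc k)) * (k choose s)
   = (Suc (Suc (Suc k)) choose Suc (Suc (Suc s))) * Suc s * Suc (Suc s) * Suc (Suc (Suc s))"
proof -
  have "Suc k * Suc (Suc k) * Suc (Suc (Suc k)) * (k choose s)
      = Suc (Suc (Suc k)) * (Suc (Suc k) * (Suc k * (k choose s)))"
    by (simp only: ac_simps)
  also have "\<dots> = Suc (Suc (Suc k)) * (Suc (Suc k) * (Suc k choose Suc s)) * Suc s"
    by (simp only: Suc_times_binomial_eq ac_simps)
  also have "\<dots> = Suc (Suc (Suc k)) * (Suc (Suc k) choose Suc (Suc s)) * Suc (Suc s) * Suc s"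
    by (simp only: Suc_times_binomial_eq ac_simps)
  also have "\<dots> = (Suc (Suc (Suc k)) choose Suc (Suc (Suc s))) * Suc (Suc (Suc s)) * Suc (Suc s) * Suc s"
    by (simp only: Suc_times_binomial_eq ac_simps)
  finally show ?thesis
    by (simp only: ac_simps)
qed

lemma sum_choose_power_div_plus3:
  "real (Suc k * Suc (Suc k) * Suc (Suc (Suc k))) * (\<Sum>s\<le>k. real (k choose s) * x ^ (s + 3) / real (s + 3))
   = real (Suc (Suc (Suc k))) * real (Suc (Suc k)) * x\<^sup>2 * (1 + x) ^ Suc k
     - 2 * real (Suc (Suc (Suc k))) * x * (1 + x) ^ Suc (Suc k) + 2 * (1 + x) ^ Suc (Suc (Suc k)) - 2"
proof -
  let ?K = "Suc (Suc (Suc k))"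
  let ?f = "\<lambda>t. (real t - 1) * (real t - 2) * real (?K choose t) * x ^ t"
  have "real (Suc k * Suc (Suc k) * ?K) * (\<Sum>s\<le>k. real (k choose s) * x ^ (s + 3) / real (s + 3))
     = (\<Sum>s\<le>k. ?f (Suc (Suc (Suc s))))"
    unfolding sum_distrib_left
  proof (rule sum.cong[OF refl])
    fix s
    have h: "real (Suc k * Suc (Suc k) * ?K) * real (k choose s)
           = real (?K choose Suc (Suc (Suc s))) * real (Suc s) * real (Suc (Suc s)) * real (Suc (Suc (Suc s)))"
      using Suc_Suc_Suc_times_binomial[of k s] by (metis of_nat_mult)
    have "real (Suc k * Suc (Suc k) * ?K) * (real (k choose s) * x ^ (s + 3) / real (s + 3))
       = (real (Suc k * Suc (Suc k) * ?K) * real (k choose s)) * x ^ (s + 3) / real (s + 3)"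
      by simp
    also have "\<dots> = real (?K choose Suc (Suc (Suc s))) * real (Suc s) * real (Suc (Suc s)) * x ^ (s + 3)"
      by (simp only: h) (simp add: field_simps del: binomial_Suc_Suc)
    also have "\<dots> = ?f (Suc (Suc (Suc s)))"
      by (simp add: algebra_simps eval_nat_numeral del: binomial_Suc_Suc)
    finally show "real (Suc k * Suc (Suc k) * ?K) * (real (k choose s) * x ^ (s + 3) / real (s + 3))
                = ?f (Suc (Suc (Suc s)))" .
  qed
  also have "\<dots> = (\<Sum>t\<le>?K. ?f t) - 2"
    by (simp only: sum.atMost_Suc_shift) (simp del: binomial_Suc_Suc)
  also have "(\<Sum>t\<le>?K. ?f t) = (\<Sum>t\<le>?K. real t * (real t - 1) * real (?K choose t) * x ^ t)
       - 2 * (\<Sum>t\<le>?K. real t * real (?K choose t) * x ^ t) + 2 * (\<Sum>t\<le>?K. real (?K choose t) * x ^ t)"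
    by (simp add: sum_distrib_left sum_subtractf[symmetric] sum.distrib[symmetric] algebra_simps
             del: binomial_Suc_Suc of_nat_Suc sum.atMost_Suc)
  also have "\<dots> = real ?K * real (Suc (Suc k)) * x\<^sup>2 * (1 + x) ^ Suc k
                 - 2 * (real ?K * x * (1 + x) ^ Suc (Suc k)) + 2 * (1 + x) ^ ?K"
    by (simp only: sum_falling2_choose_power sum_mult_choose_power sum_choose_power)
  finally show ?thesis
    by simp
qed

lemma sum_pair_avoiding_subsets_power:
  "(\<Sum>s\<le>Suc (Suc k). pair_avoiding_subsets k s * x ^ Suc s / real (Suc s))
   = (\<Sum>s\<le>Suc (Suc k). real (Suc (Suc k) choose s) * x ^ Suc s / real (Suc s))
     - (\<Sum>s\<le>k. real (k choose s) * x ^ (s + 3) / real (s + 3))"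
proof -
  have "(\<Sum>s\<le>Suc (Suc k). (if 2 \<le> s then real (k choose (s - 2)) else 0) * x ^ Suc s / real (Suc s))
      = (\<Sum>s\<le>k. real (k choose s) * x ^ (s + 3) / real (s + 3))"
    by (subst sum.atMost_Suc_shift, subst sum.atMost_Suc_shift) (simp add: eval_nat_numeral add.commute)
  then show ?thesis
    unfolding pair_avoiding_subsets_def by (simp add: left_diff_distrib diff_divide_distrib sum_subtractf)
qed

lemma sum_pair_avoiding_subsets_closed_form:
  fixes x :: real and k :: nat
  assumes x0: "x > 0"
  defines "m \<equiv> real (k + 3)" and "u \<equiv> (1 + x) ^ (k + 3)" and "p \<equiv> x / (1 + x)"
  shows "(\<Sum>s\<le>Suc (Suc k). pair_avoiding_subsets k s * x ^ Suc s / real (Suc s))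
         = (u - 1) / m - (m * (m - 1) * p\<^sup>2 * u - 2 * m * p * u + 2 * u - 2) / (m * (m - 1) * (m - 2))"
proof -
  define y where "y = 1 + x"
  have y0: "y > 0"
    using x0 by (simp add: y_def)
  have m3: "m \<ge> 3"
    by (simp add: m_def)
  have "m * (\<Sum>s\<le>Suc (Suc k). real (Suc (Suc k) choose s) * x ^ Suc s / real (Suc s)) = u - 1"
    using sum_choose_power_div_Suc[of "Suc (Suc k)" x]
    by (simp del: sum.atMost_Suc add: m_def u_def eval_nat_numeral)
  then have first: "(\<Sum>s\<le>Suc (Suc k). real (Suc (Suc k) choose s) * x ^ Suc s / real (Suc s)) = (u - 1) / m"
    using m3 by (simp add: field_simps)
  have den: "real (Suc k * Suc (Suc k) * Suc (Suc (Suc k))) = m * (m - 1) * (m - 2)"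
    by (simp add: m_def algebra_simps)
  have "p\<^sup>2 * u = x\<^sup>2 * y ^ Suc k" and "p * u = x * y ^ Suc (Suc k)"
    unfolding p_def u_def y_def[symmetric] using y0
    by (simp_all add: eval_nat_numeral field_simps power2_eq_square)
  then have e1: "m * (m - 1) * x\<^sup>2 * y ^ Suc k = m * (m - 1) * p\<^sup>2 * u"
    and e2: "2 * m * x * y ^ Suc (Suc k) = 2 * m * p * u"
    by (simp_all add: mult.assoc)
  have e3: "y ^ Suc (Suc (Suc k)) = u"
    by (simp add: u_def y_def eval_nat_numeral)
  have r1: "real (Suc (Suc (Suc k))) = m" and r2: "real (Suc (Suc k)) = m - 1" and y1: "1 + x = y"
    by (simp_all add: m_def y_def)
  have "m * (m - 1) * (m - 2) * (\<Sum>s\<le>k. real (k choose s) * x ^ (s + 3) / real (s + 3))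
        = m * (m - 1) * p\<^sup>2 * u - 2 * m * p * u + 2 * u - 2"
    using sum_choose_power_div_plus3[of k x] unfolding den r1 r2 y1 e1 e2 e3 .
  then have second: "(\<Sum>s\<le>k. real (k choose s) * x ^ (s + 3) / real (s + 3))
                     = (m * (m - 1) * p\<^sup>2 * u - 2 * m * p * u + 2 * u - 2) / (m * (m - 1) * (m - 2))"
    using m3 by (simp add: eq_divide_eq mult.commute)
  show ?thesis
    by (simp only: sum_pair_avoiding_subsets_power first second)
qed

lemma indep_poly_le_pair_avoiding_sum:
  assumes sg: "simple_graph V E" and cV: "card V = k + 3 + d" and md: "min_degree_ge V E d"
    and small: "\<And>S. independent_set V E S \<Longrightarrow> card S < k + 3" and x0: "x \<ge> 0"
  shows "indep_poly V E x
         \<le> 1 + real (card V) * (\<Sum>s\<le>Suc (Suc k). pair_avoiding_subsets k s * x ^ Suc s / real (Suc s))"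
proof -
  let ?h = "\<lambda>s. real (card V) * (pair_avoiding_subsets k s * x ^ Suc s / real (Suc s))"
  have fV: "finite V"
    using sg by (simp add: simple_graph_def)
  define N where "N = Suc (Suc k + d)"
  have "num_indep V E 0 = 1"
    by (rule num_indep_0[OF fV])
  moreover have "card V = Suc N"
    by (simp add: cV N_def)
  ultimately have "indep_poly V E x = 1 + (\<Sum>s\<le>N. real (num_indep V E (Suc s)) * x ^ Suc s)"
    unfolding indep_poly_def by (simp only: sum.atMost_Suc_shift) simp
  also have "\<dots> \<le> 1 + (\<Sum>s\<le>N. ?h s)"
  proof (intro add_left_mono sum_mono)
    fix s
    have "real (num_indep V E (Suc s)) \<le> real (card V) * pair_avoiding_subsets k s / real (Suc s)"
      using mult_num_indep_le[OF sg cV md small, of s] by (simp add: field_simps del: of_nat_Suc)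
    then have "real (num_indep V E (Suc s)) * x ^ Suc s
             \<le> real (card V) * pair_avoiding_subsets k s / real (Suc s) * x ^ Suc s"
      using x0 by (intro mult_right_mono) auto
    then show "real (num_indep V E (Suc s)) * x ^ Suc s \<le> ?h s"
      by (simp add: field_simps del: of_nat_Suc)
  qed
  also have "(\<Sum>s\<le>N. ?h s) = (\<Sum>s\<le>Suc (Suc k). ?h s)"
    by (rule sum.mono_neutral_right) (auto simp: N_def pair_avoiding_subsets_eq_0)
  finally show ?thesis
    unfolding sum_distrib_left .
qed

section \<open>The threshold on \<open>n\<close>\<close>

lemma two_mult_ln_le:
  fixes x :: real
  assumes "x \<ge> 0"
  shows "2 * (1 + x) * ln (1 + x) \<le> x * (2 + x)"
proof -
  let ?f = "\<lambda>t::real. t * (2 + t) - 2 * (1 + t) * ln (1 + t)"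
  have "?f 0 \<le> ?f x"
  proof (rule DERIV_nonneg_imp_nondecreasing[OF assms])
    fix t :: real assume t: "0 \<le> t" "t \<le> x"
    have "DERIV ?f t :> (2 + 2 * t) - (2 * ln (1 + t) + 2 * (1 + t) * (1 / (1 + t)))"
      using t by (auto intro!: derivative_eq_intros)
    moreover have "(2 + 2 * t) - (2 * ln (1 + t) + 2 * (1 + t) * (1 / (1 + t))) = 2 * (t - ln (1 + t))"
      using t by (simp add: field_simps)
    moreover have "ln (1 + t) \<le> t"
      using t ln_add_one_self_le_self by blast
    ultimately show "\<exists>y. DERIV ?f t :> y \<and> 0 \<le> y"
      by auto
  qed
  then show ?thesis
    by simp
qed

lemma C_const_ge:
  fixes x :: real
  assumes "x > 0"
  shows "2 / x \<le> C_const x - 1"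
proof -
  define y where "y = 1 + x"
  have y0: "y > 0"
    using assms by (simp add: y_def)
  let ?L = "ln y"
  have pos: "0 < ?L - x / y"
    using ln_add1_gt[of x] assms by (simp add: y_def add.commute)
  have "x\<^sup>2 / (2 * y) - (?L - x / y) = (x * (2 + x) - 2 * y * ?L) / (2 * y)"
    using y0 by (simp add: field_simps power2_eq_square)
  moreover have "0 \<le> (x * (2 + x) - 2 * y * ?L) / (2 * y)"
    using two_mult_ln_le[of x] assms y0 by (simp add: y_def)
  ultimately have le: "?L - x / y \<le> x\<^sup>2 / (2 * y)"
    by linarith
  have "2 / x \<le> (x / y) / (x\<^sup>2 / (2 * y))"
    using assms y0 by (simp add: field_simps power2_eq_square)
  also have "\<dots> \<le> (x / y) / (?L - x / y)"
    using le pos assms y0 by (intro divide_left_mono) auto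
  also have "\<dots> = C_const x - 1"
    using pos unfolding C_const_def y_def by (simp add: field_simps)
  finally show ?thesis .
qed

lemma D_const_le:
  fixes x :: real
  assumes "x > 0"
  shows "2 / (x * (1 + x)) \<le> - D_const x"
proof -
  let ?L = "ln (1 + x)"
  have Lpos: "?L > 0" and Lle: "?L \<le> x"
    using assms ln_add_one_self_le_self by simp_all
  have "ln (x / (1 + x)) \<le> x / (1 + x) - 1"
    using ln_le_minus_one assms by simp
  then have ln_ge: "1 / (1 + x) \<le> ln ((1 + x) / x)"
    using assms by (simp add: ln_div field_simps)
  have "2 * (1 / (1 + x)) / x \<le> 2 * ln ((1 + x) / x) / ?L"
    using ln_ge Lpos Lle assms by (intro frac_le) auto
  also have "\<dots> = - D_const x"
    unfolding D_const_def using assms by (simp add: ln_div divide_simps)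
  finally show ?thesis
    by (simp add: field_simps)
qed

text \<open>A lower bound for \<open>n - \<delta>\<close> under the hypothesis of the theorem, coming from
  \<open>C\<^sub>x - 1 \<ge> 2/x\<close> and \<open>-D\<^sub>x \<ge> 2/(x(1+x))\<close>.\<close>
definition threshold :: "real \<Rightarrow> real \<Rightarrow> real" where
  "threshold x d = 2 / x * d\<^sup>2 + (2 / x + 1) * d + 4 / (x\<^sup>2 * (1 + x)) * d + 2 / (x * (1 + x))"

lemma threshold_le:
  fixes x d N :: real
  assumes x0: "x > 0" and d1: "d \<ge> 1"
    and N: "(C_const x - 1) * d\<^sup>2 + ((1 - D_const x) * C_const x + 1 + D_const x) * d - D_const x \<le> N"
  shows "threshold x d \<le> N - d"
proof -
  define c where "c = C_const x - 1"
  define e where "e = - D_const x"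
  have c: "2 / x \<le> c" and e: "2 / (x * (1 + x)) \<le> e"
    using C_const_ge[OF x0] D_const_le[OF x0] by (simp_all add: c_def e_def)
  have "0 < 2 / (x * (1 + x))"
    using x0 by simp
  then have e0: "0 \<le> e"
    using e by linarith
  have "4 / (x\<^sup>2 * (1 + x)) = 2 / (x * (1 + x)) * (2 / x)"
    by (simp add: power2_eq_square mult_ac)
  also have "\<dots> \<le> e * c"
    using c e e0 x0 by (intro mult_mono) auto
  finally have "4 / (x\<^sup>2 * (1 + x)) * d \<le> e * c * d"
    using d1 by (intro mult_right_mono) auto
  moreover have "2 / x * d\<^sup>2 \<le> c * d\<^sup>2" and "(2 / x + 1) * d \<le> (c + 1) * d"
    using c d1 by (intro mult_right_mono; simp)+
  moreover have "N - d \<ge> c * d\<^sup>2 + (c + 1) * d + e * c * d + e"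
    using N unfolding c_def e_def by (simp add: algebra_simps)
  ultimately show ?thesis
    unfolding threshold_def using e by linarith
qed

lemma threshold_ge:
  fixes x d :: real
  assumes x0: "x > 0" and d1: "d \<ge> 1"
  shows "4 / x + 1 \<le> threshold x d"
proof -
  have "2 / x * 1 \<le> 2 / x * d\<^sup>2" and "(2 / x + 1) * 1 \<le> (2 / x + 1) * d"
    using x0 d1 by (intro mult_left_mono; simp add: one_le_power)+
  moreover have "0 \<le> 4 / (x\<^sup>2 * (1 + x)) * d" and "0 \<le> 2 / (x * (1 + x))"
    using x0 d1 by simp_all
  moreover have "4 / x + 1 = 2 / x * 1 + (2 / x + 1) * 1"
    by simp
  ultimately show ?thesis
    unfolding threshold_def by linarith
qed

lemma one_lt_threshold:
  fixes x d :: real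
  assumes "x > 0" and "d \<ge> 1"
  shows "1 < threshold x d"
proof -
  have "0 < 4 / x"
    using assms by simp
  then show ?thesis
    using threshold_ge[OF assms] by linarith
qed

section \<open>Comparison with the complete bipartite graph\<close>

text \<open>With \<open>p = x/(1+x)\<close> and \<open>u = (1+x)\<^sup>m\<close>, the amount by which
  \<open>(1+x)\<^sup>m + (1+x)\<^sup>\<delta> - 1\<close> exceeds the summed counting bound, times \<open>m(m-1)(m-2)\<close>, is
  \<open>u m counting_gap m \<delta> p + m(m-1)(m-2)((1+x)\<^sup>\<delta> - 2) + (m+\<delta>) m (m-3)\<close>.\<close>

definition counting_gap :: "real \<Rightarrow> real \<Rightarrow> real \<Rightarrow> real" where
  "counting_gap m d p = 2 + m * (m - 1) * p\<^sup>2 - 2 * m * p - d * (m - 1) * (1 - p\<^sup>2) + 2 * d * (1 - p)"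

definition p_threshold :: "real \<Rightarrow> real \<Rightarrow> real" where
  "p_threshold p d = 2 * (1 - p) * p * d\<^sup>2 + (2 * (1 - p) + p) * p * d + 4 * (1 - p) ^ 3 * d
                     + 2 * (1 - p)\<^sup>2 * p"

lemma p_threshold_eq:
  fixes x d :: real
  assumes "x > 0"
  shows "p_threshold (x / (1 + x)) d = (x / (1 + x))\<^sup>2 * threshold x d"
proof -
  define y where "y = 1 + x"
  have y0: "y \<noteq> 0" and x0: "x \<noteq> 0"
    using assms by (simp_all add: y_def)
  have q: "1 - x / y = 1 / y"
    using y0 by (simp add: y_def field_simps)
  have th: "threshold x d = 2 / x * d\<^sup>2 + (2 / x + 1) * d + 4 / (x\<^sup>2 * y) * d + 2 / (x * y)"
    by (simp add: threshold_def y_def)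
  show ?thesis
    unfolding y_def[symmetric] th p_threshold_def q using x0 y0
    by (simp add: field_simps power2_eq_square power3_eq_cube)
qed

lemma p_threshold_minus_quadratic:
  assumes "q = 1 - p"
  shows "p_threshold p d - (p\<^sup>2 + 2 * p + d * (1 - p) * (1 + p))
         = 2 * p * q * d\<^sup>2 + d * (p\<^sup>2 - q\<^sup>2 + 4 * q ^ 3) + 2 * p * q\<^sup>2 - p\<^sup>2 - 2 * p"
  unfolding p_threshold_def assms by (simp add: algebra_simps power2_eq_square power3_eq_cube)

lemma counting_gap_pos_if_quadratic:
  fixes p m d :: real
  assumes "m \<ge> 0" "d \<ge> 0" "0 < p" "p < 1"
    and "p\<^sup>2 + 2 * p + d * (1 - p) * (1 + p) \<le> p\<^sup>2 * m"
  shows "0 < counting_gap m d p"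
proof -
  have "counting_gap m d p = m * (p\<^sup>2 * m - (p\<^sup>2 + 2 * p + d * (1 - p) * (1 + p))) + (2 + d * (1 - p) * (3 + p))"
    unfolding counting_gap_def by (simp add: algebra_simps power2_eq_square)
  moreover have "m * (p\<^sup>2 * m - (p\<^sup>2 + 2 * p + d * (1 - p) * (1 + p))) \<ge> 0" and "d * (1 - p) * (3 + p) \<ge> 0"
    using assms by simp_all
  ultimately show ?thesis
    by linarith
qed

lemma counting_gap_pos_if_linear:
  fixes p m d :: real
  assumes "m \<ge> 3" "2 * p * (1 - p) * (3 + d) < 2"
    and "2 * p + d * (1 - p) * (1 + p) \<le> p\<^sup>2 * (m + 2)"
  shows "0 < counting_gap m d p"
proof -
  have "counting_gap m d p
        = (2 - 2 * p * (1 - p) * (3 + d)) + (m - 3) * (p\<^sup>2 * (m + 2) - 2 * p - d * (1 - p) * (1 + p))"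
    unfolding counting_gap_def by (simp add: algebra_simps power2_eq_square)
  moreover have "(m - 3) * (p\<^sup>2 * (m + 2) - 2 * p - d * (1 - p) * (1 + p)) \<ge> 0"
    using assms by simp
  ultimately show ?thesis
    using assms by linarith
qed

lemma counting_gap_pos_small_p:
  fixes p m d :: real
  assumes p0: "0 < p" and ph: "p \<le> 1/2" and d1: "d \<ge> 1" and m3: "m \<ge> 3"
    and hR: "p_threshold p d \<le> p\<^sup>2 * m"
  shows "0 < counting_gap m d p"
proof -
  define q where "q = 1 - p"
  have qh: "q \<ge> 1/2"
    using ph by (simp add: q_def)
  have c0: "0 \<le> p\<^sup>2 - q\<^sup>2 + 4 * q ^ 3"
  proof -
    have "4 * q ^ 3 - q\<^sup>2 = q\<^sup>2 * (4 * q - 1)"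
      by (simp add: algebra_simps power2_eq_square power3_eq_cube)
    moreover have "q\<^sup>2 * (4 * q - 1) \<ge> 0"
      using qh by simp
    moreover have "p\<^sup>2 \<ge> 0"
      by simp
    ultimately show ?thesis
      by linarith
  qed
  have "2 * p * q \<le> 2 * p * q * d\<^sup>2"
    using mult_left_mono[of 1 "d\<^sup>2" "2 * p * q"] d1 p0 qh by (simp add: one_le_power)
  moreover have "p\<^sup>2 - q\<^sup>2 + 4 * q ^ 3 \<le> d * (p\<^sup>2 - q\<^sup>2 + 4 * q ^ 3)"
    using mult_right_mono[of 1 d "p\<^sup>2 - q\<^sup>2 + 4 * q ^ 3"] d1 c0 by simp
  moreover have "2 * p * q + (p\<^sup>2 - q\<^sup>2 + 4 * q ^ 3) + 2 * p * q\<^sup>2 - p\<^sup>2 - 2 * p = (2 * q - 1) * (q\<^sup>2 + 2)"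
    unfolding q_def by (simp add: algebra_simps power2_eq_square power3_eq_cube)
  moreover have "(2 * q - 1) * (q\<^sup>2 + 2) \<ge> 0"
    using qh by simp
  ultimately have "p_threshold p d - (p\<^sup>2 + 2 * p + d * (1 - p) * (1 + p)) \<ge> 0"
    using p_threshold_minus_quadratic[OF q_def, of d] by linarith
  then show ?thesis
    using hR p0 ph d1 m3 by (intro counting_gap_pos_if_quadratic) auto
qed

lemma counting_gap_pos_degree_1:
  fixes p m :: real
  assumes ph: "1/2 < p" and p1: "p < 1" and m3: "m \<ge> 3"
    and hR: "p_threshold p 1 \<le> p\<^sup>2 * m"
  shows "0 < counting_gap m 1 p"
proof (rule counting_gap_pos_if_linear[OF m3])
  have "p * (1 - p) = 1/4 - (p - 1/2)\<^sup>2"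
    by (simp add: algebra_simps power2_eq_square)
  moreover have "(p - 1/2)\<^sup>2 > 0"
    using ph by simp
  moreover have "2 * p * (1 - p) * (3 + 1) = 8 * (p * (1 - p))"
    by simp
  ultimately show "2 * p * (1 - p) * (3 + 1) < 2"
    by linarith
  show "2 * p + 1 * (1 - p) * (1 + p) \<le> p\<^sup>2 * (m + 2)"
  proof (cases "p \<ge> 5/8")
    case True
    have "p\<^sup>2 * 5 \<le> p\<^sup>2 * (m + 2)"
      using m3 by (intro mult_left_mono) auto
    moreover have "6 * p\<^sup>2 - 2 * p - 1 = (p - 5/8) * (6 * p + 7/4) + 3/32"
      by (simp add: algebra_simps power2_eq_square)
    moreover have "(p - 5/8) * (6 * p + 7/4) \<ge> 0"
      using True by simp
    ultimately show ?thesis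
      by (simp add: algebra_simps power2_eq_square)
  next
    case False
    have "p_threshold p 1 + 2 * p\<^sup>2 - 2 * p - (1 - p) * (1 + p)
          = (2 * p - 1) + 4 * (1 - p) ^ 3 + 2 * p * (1 - p)\<^sup>2"
      unfolding p_threshold_def by (simp add: algebra_simps power2_eq_square power3_eq_cube)
    moreover have "(2 * p - 1) + 4 * (1 - p) ^ 3 + 2 * p * (1 - p)\<^sup>2 \<ge> 0"
      using ph p1 by simp
    ultimately show ?thesis
      using hR by (simp add: algebra_simps)
  qed
qed

lemma counting_gap_pos_degree_2:
  fixes p m :: real
  assumes ph: "1/2 < p" and p1: "p < 1" and m3: "m \<ge> 3"
    and hR: "p_threshold p 2 \<le> p\<^sup>2 * m"
  shows "0 < counting_gap m 2 p"
proof (cases "p \<le> 3/4")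
  case True
  define q where "q = 1 - p"
  have "p_threshold p 2 - (p\<^sup>2 + 2 * p + 2 * (1 - p) * (1 + p)) = -1 + 8 * q - 7 * q\<^sup>2 + 6 * q ^ 3"
    unfolding p_threshold_def q_def by (simp add: algebra_simps power2_eq_square power3_eq_cube)
  moreover have "-1 + 8 * q - 7 * q\<^sup>2 + 6 * q ^ 3 \<ge> 0"
  proof -
    have "(1/4) * (8 - 7 * (1/2)) \<le> q * (8 - 7 * q)"
      using True ph by (intro mult_mono) (auto simp: q_def)
    moreover have "8 * q - 7 * q\<^sup>2 = q * (8 - 7 * q)"
      by (simp add: algebra_simps power2_eq_square)
    ultimately have "9/8 \<le> 8 * q - 7 * q\<^sup>2"
      by simp
    moreover have "6 * q ^ 3 \<ge> 0"
      using p1 by (simp add: q_def)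
    ultimately show ?thesis
      by linarith
  qed
  ultimately show ?thesis
    using hR ph p1 m3 by (intro counting_gap_pos_if_quadratic) auto
next
  case False
  show ?thesis
  proof (rule counting_gap_pos_if_linear[OF m3])
    have "p * (1 - p) = 1/4 - (p - 1/2)\<^sup>2"
      by (simp add: algebra_simps power2_eq_square)
    moreover have "(1/4)\<^sup>2 \<le> (p - 1/2)\<^sup>2"
      using False by (intro power_mono) auto
    ultimately show "2 * p * (1 - p) * (3 + 2) < 2"
      by (simp add: power2_eq_square)
    have "7 * p\<^sup>2 - 2 * p - 2 = (p - 3/4) * (7 * p + 13/4) + 7/16"
      by (simp add: field_simps power2_eq_square)
    moreover have "(p - 3/4) * (7 * p + 13/4) \<ge> 0"
      using False by simp
    moreover have "p\<^sup>2 * 5 \<le> p\<^sup>2 * (m + 2)"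
      using m3 by (intro mult_left_mono) auto
    moreover have "2 * p + 2 * (1 - p) * (1 + p) = 2 * p + 2 - 2 * p\<^sup>2"
      by (simp add: algebra_simps power2_eq_square)
    ultimately show "2 * p + 2 * (1 - p) * (1 + p) \<le> p\<^sup>2 * (m + 2)"
      by linarith
  qed
qed

lemma counting_gap_pos_degree_ge_3:
  fixes p m d :: real
  assumes ph: "1/2 < p" and p1: "p < 1" and d3: "d \<ge> 3" and m3: "m \<ge> 3"
    and hR: "p_threshold p d \<le> p\<^sup>2 * m"
  shows "0 < counting_gap m d p"
proof -
  define q where "q = 1 - p"
  have q: "0 < q" "q < 1/2"
    using ph p1 by (simp_all add: q_def)
  have c0: "0 \<le> p\<^sup>2 - q\<^sup>2 + 4 * q ^ 3"
  proof -
    have "p\<^sup>2 - q\<^sup>2 = (p - q) * (p + q)"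
      by (simp add: algebra_simps power2_eq_square)
    moreover have "(p - q) * (p + q) \<ge> 0" and "q ^ 3 \<ge> 0"
      using ph q by simp_all
    ultimately show ?thesis
      by linarith
  qed
  have "2 * p * q * 9 \<le> 2 * p * q * d\<^sup>2"
  proof -
    have "3\<^sup>2 \<le> d\<^sup>2"
      using d3 by (intro power_mono) auto
    then show ?thesis
      using ph q by (intro mult_left_mono) auto
  qed
  moreover have "3 * (p\<^sup>2 - q\<^sup>2 + 4 * q ^ 3) \<le> d * (p\<^sup>2 - q\<^sup>2 + 4 * q ^ 3)"
    using d3 c0 by (intro mult_right_mono) auto
  moreover have "2 * p * q * 9 + 3 * (p\<^sup>2 - q\<^sup>2 + 4 * q ^ 3) + 2 * p * q\<^sup>2 - p\<^sup>2 - 2 * p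
                 = q * (10 * (q - 17/20)\<^sup>2 + 351/40)"
    unfolding q_def by (simp add: algebra_simps power2_eq_square power3_eq_cube)
  moreover have "q * (10 * (q - 17/20)\<^sup>2 + 351/40) \<ge> 0"
    using q by simp
  ultimately have "p_threshold p d - (p\<^sup>2 + 2 * p + d * (1 - p) * (1 + p)) \<ge> 0"
    using p_threshold_minus_quadratic[OF q_def, of d] by linarith
  then show ?thesis
    using hR ph p1 d3 m3 by (intro counting_gap_pos_if_quadratic) auto
qed

lemma counting_gap_pos:
  fixes p m :: real and d :: nat
  assumes p0: "0 < p" and p1: "p < 1" and d1: "d \<ge> 1" and m3: "m \<ge> 3"
    and hR: "p_threshold p d \<le> p\<^sup>2 * m"
  shows "0 < counting_gap m d p"
proof (cases "p \<le> 1/2")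
  case True
  then show ?thesis
    using counting_gap_pos_small_p[OF p0 _ _ m3 hR] d1 by simp
next
  case False
  consider "d = 1" | "d = 2" | "d \<ge> 3"
    using d1 by linarith
  then show ?thesis
  proof cases
    case 1
    then show ?thesis
      using counting_gap_pos_degree_1[OF _ p1 m3] hR False by simp
  next
    case 2
    then show ?thesis
      using counting_gap_pos_degree_2[OF _ p1 m3] hR False by simp
  next
    case 3
    then show ?thesis
      using counting_gap_pos_degree_ge_3[OF _ p1 _ m3 hR] False by simp
  qed
qed

lemma counting_bound_lt:
  fixes p m d u v :: real
  assumes m3: "m \<ge> 3" and d1: "d \<ge> 1" and u0: "u > 0" and v1: "v > 1"
    and gap: "0 < counting_gap m d p" and v2_or_m5: "v \<ge> 2 \<or> m \<ge> 5"
  shows "1 + (m + d) * ((u - 1) / m - (m * (m - 1) * p\<^sup>2 * u - 2 * m * p * u + 2 * u - 2) / (m * (m - 1) * (m - 2)))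
         < u + v - 1"
proof -
  let ?X = "m * (m - 1) * p\<^sup>2 * u - 2 * m * p * u + 2 * u - 2"
  define D where "D = m * (m - 1) * (m - 2)"
  have D0: "D > 0"
    unfolding D_def using m3 by simp
  have frac: "a / m - b / (m * c * e) = (a * c * e - b) / (m * c * e)"
    if "c \<noteq> 0" "e \<noteq> 0" for a b c e :: real
    using that m3 by (simp add: field_simps)
  have "(u - 1) / m - ?X / (m * (m - 1) * (m - 2)) = ((u - 1) * (m - 1) * (m - 2) - ?X) / D"
    unfolding D_def using m3 by (intro frac) auto
  then have "D * (1 + (m + d) * ((u - 1) / m - ?X / (m * (m - 1) * (m - 2))))
             = D + (m + d) * ((u - 1) * (m - 1) * (m - 2) - ?X)"
    using D0 by (simp add: distrib_left)
  also have "\<dots> = D + u * (D - m * counting_gap m d p) - (m + d) * (m * (m - 3))"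
    unfolding D_def counting_gap_def by (simp add: algebra_simps power2_eq_square)
  finally have key: "D * (1 + (m + d) * ((u - 1) / m - ?X / (m * (m - 1) * (m - 2))))
                     = D + u * (D - m * counting_gap m d p) - (m + d) * (m * (m - 3))" .
  have "u * (m * counting_gap m d p) > 0"
    using u0 m3 gap by simp
  moreover have "D * (2 - v) \<le> (m + d) * (m * (m - 3))"
    using v2_or_m5
  proof
    assume "v \<ge> 2"
    then have "D * (2 - v) \<le> 0"
      using D0 by (simp add: mult_nonneg_nonpos)
    moreover have "(m + d) * (m * (m - 3)) \<ge> 0"
      using m3 d1 by simp
    ultimately show ?thesis
      by linarith
  next
    assume m5: "m \<ge> 5"
    have "D * (2 - v) \<le> D * 1"
      using D0 v1 by (intro mult_left_mono) auto
    moreover have "(m + d) * (m * (m - 3)) - D = m * (d * (m - 3) - 2)"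
      unfolding D_def by (simp add: algebra_simps)
    moreover have "1 * 2 \<le> d * (m - 3)"
      using d1 m5 by (intro mult_mono) auto
    then have "m * (d * (m - 3) - 2) \<ge> 0"
      using m5 by simp
    ultimately show ?thesis
      by linarith
  qed
  ultimately have "D * (1 + (m + d) * ((u - 1) / m - ?X / (m * (m - 1) * (m - 2)))) < D * (u + v - 1)"
    using key by (simp add: algebra_simps)
  then show ?thesis
    using D0 by simp
qed

lemma indep_poly_lt_of_independence_lt:
  fixes x :: real
  assumes sg: "simple_graph V E" and cV: "card V = m + d" and md: "min_degree_ge V E d"
    and small: "\<And>S. independent_set V E S \<Longrightarrow> card S < m" and m3: "3 \<le> m" and d1: "1 \<le> d"
    and x0: "x > 0" and thr: "threshold x d \<le> real m"
  shows "indep_poly V E x < (1 + x) ^ m + (1 + x) ^ d - 1"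
proof -
  obtain k where k: "m = k + 3"
    using m3 le_Suc_ex by (metis add.commute)
  have cVk: "card V = k + 3 + d" and smallk: "\<And>S. independent_set V E S \<Longrightarrow> card S < k + 3"
    using cV small k by simp_all
  define p where "p = x / (1 + x)"
  have "p_threshold p d \<le> p\<^sup>2 * real m"
    unfolding p_def p_threshold_eq[OF x0] using thr by (intro mult_left_mono) auto
  then have gap: "0 < counting_gap (real m) (real d) p"
    using counting_gap_pos[of p d "real m"] x0 d1 m3 by (simp add: p_def)
  have v2_or_m5: "(1 + x) ^ d \<ge> 2 \<or> real m \<ge> 5"
  proof (cases "(1 + x) ^ d \<ge> 2")
    case False
    moreover have "(1 + x) ^ 1 \<le> (1 + x) ^ d"
      using d1 x0 by (intro power_increasing) auto
    ultimately have "x < 1"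
      by simp
    then have "5 < 4 / x + 1"
      using x0 by (simp add: field_simps)
    then show ?thesis
      using threshold_ge[OF x0, of d] d1 thr by simp
  qed simp
  have v1: "1 < (1 + x) ^ d"
    using x0 d1 by (simp add: one_less_power)
  have "indep_poly V E x
        \<le> 1 + real (card V) * (\<Sum>s\<le>Suc (Suc k). pair_avoiding_subsets k s * x ^ Suc s / real (Suc s))"
    using indep_poly_le_pair_avoiding_sum[of V E k d x, OF sg cVk md smallk] x0 by simp
  also have "\<dots> = 1 + (real m + real d) * ((((1 + x) ^ m - 1) / real m
                 - (real m * (real m - 1) * p\<^sup>2 * (1 + x) ^ m - 2 * real m * p * (1 + x) ^ m
                    + 2 * (1 + x) ^ m - 2) / (real m * (real m - 1) * (real m - 2))))"
    unfolding sum_pair_avoiding_subsets_closed_form[OF x0] cV k p_def by simp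
  also have "\<dots> < (1 + x) ^ m + (1 + x) ^ d - 1"
    using counting_bound_lt[OF _ _ _ v1 gap v2_or_m5] m3 d1 x0 by simp
  finally show ?thesis .
qed

lemma indep_poly_lt_or_iso_Kab:
  fixes x :: real
  assumes sg: "simple_graph V E" and cV: "card V = m + d" and md: "min_degree_ge V E d"
    and d1: "1 \<le> d" and x0: "x > 0" and thr: "threshold x d \<le> real m"
  shows "graph_iso V E (Kab_verts d m) (Kab_edge d m) \<or> indep_poly V E x < (1 + x) ^ m + (1 + x) ^ d - 1"
proof -
  have fV: "finite V"
    using sg by (simp add: simple_graph_def)
  have "1 < threshold x d"
    using one_lt_threshold[OF x0] d1 by simp
  then have m2: "2 \<le> m"
    using thr by linarith
  show ?thesis
  proof (cases "\<exists>A. independent_set V E A \<and> m \<le> card A")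
    case True
    then obtain A where "independent_set V E A" "m + d - d \<le> card A"
      by auto
    moreover have "1 \<le> m + d - d"
      using m2 by simp
    ultimately have "graph_iso V E (Kab_verts d (m + d - d)) (Kab_edge d (m + d - d))
                     \<or> indep_poly V E x < (1 + x) ^ (m + d - d) + (1 + x) ^ d - 1"
      by (rule indep_poly_large_independent_set[OF sg cV md x0])
    then show ?thesis
      by simp
  next
    case False
    then have small: "\<And>S. independent_set V E S \<Longrightarrow> card S < m"
      by (auto simp: not_le)
    show ?thesis
    proof (cases "3 \<le> m")
      case True
      then show ?thesis
        using indep_poly_lt_of_independence_lt[OF sg cV md _ True d1 x0 thr, THEN disjI2] small by blast
    next
      case False
      have "card S \<le> 1" if "independent_set V E S" for S
        using small[OF that] False by linarith
      then show ?thesis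
        using indep_poly_lt_of_independence_le_1[OF fV cV _ m2 x0, THEN disjI2] by blast
    qed
  qed
qed

theorem mainTheorem5:
  fixes V :: "'a set" and E :: "'a \<Rightarrow> 'a \<Rightarrow> bool" and \<delta> n :: nat and x :: real
  assumes "simple_graph V E"
    and "card V = n"
    and "\<delta> \<ge> 1"
    and "min_degree_ge V E \<delta>"
    and "x > 0"
    and "real n \<ge> (C_const x - 1) * (real \<delta>)^2
                 + ((1 - D_const x) * C_const x + 1 + D_const x) * real \<delta> - D_const x"
  shows "graph_iso V E (Kab_verts \<delta> (n - \<delta>)) (Kab_edge \<delta> (n - \<delta>))
         \<or> indep_poly V E x < indep_poly (Kab_verts \<delta> (n - \<delta>)) (Kab_edge \<delta> (n - \<delta>)) x"
proof -
  have thr: "threshold x \<delta> \<le> real n - \<delta>"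
    using threshold_le[OF assms(5)] assms(3,6) by simp
  moreover have "0 < threshold x \<delta>"
    using one_lt_threshold[OF assms(5), of \<delta>] assms(3) by simp
  ultimately have "card V = (n - \<delta>) + \<delta>" and "threshold x \<delta> \<le> real (n - \<delta>)"
    using assms(2) by (simp_all add: of_nat_diff)
  then have "graph_iso V E (Kab_verts \<delta> (n - \<delta>)) (Kab_edge \<delta> (n - \<delta>))
             \<or> indep_poly V E x < (1 + x) ^ (n - \<delta>) + (1 + x) ^ \<delta> - 1"
    using indep_poly_lt_or_iso_Kab[OF assms(1) _ assms(4,3,5)] by blast
  then show ?thesis
    using indep_poly_Kab_ge[of x "n - \<delta>" \<delta>] assms(5) by auto
qed

end
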